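(* Let $\mathcal{S}$ be a set and $T:\bigcup_{n\in\mathbb{N}}\mathcal{S}^n\to\mathbb{R}_{\ge0}$ satisfy $T(AB)\ge T(A)+T(B)$ for all $A,B$ (where $AB$ is concatenation) and $T(s)=0$ for every single element $s\in\mathcal{S}$. Let $\epsilon>0$, $t>0$ and $n\in\mathbb{N}$. Then for every $U\in\mathcal{S}^n$ with $T(U)\le t$, the number of blocks of the partition $P_{U;T,\epsilon}$ produced by the $(T,\epsilon)$ division scheme satisfies $$|P_{U;T,\epsilon}| \leq \log_2(4n)\Big(1+\frac{t}{\epsilon}\Big).$$
   Context: The $(T,\epsilon)$ division scheme applied to $U\in\mathcal{S}^n$: if $T(U)\le\epsilon$, stop and output $U$; otherwise split $U = U_1'U_2'$ into two contiguous parts with $|U_1'| = \lfloor |U|/2\rfloor$ and $|U_2'| = |U|-|U_1'|$. At each subsequent step, every current part $U_i'$ with $T(U_i')>\epsilon$ is split into two almost equal contiguous parts in the same way; repeat until every part has $T\le\epsilon$. The resulting partition of $[n]$ into contiguous blocks is $P_{U;T,\epsilon}$, and $|P_{U;T,\epsilon}|$ is its number of blocks. *)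

theory Defs
  imports Complex_Main
begin

text \<open>The result is the list of blocks (contiguous, in order) of the partition
  P_{U;T,eps}. The guard length U \<le> 1 is only needed for termination; under the
  hypotheses of the lemma (T of a singleton is 0, T nonnegative and superadditive, hence
  T of the empty list is 0) it never changes the outcome.\<close>

function division_blocks :: "('a list \<Rightarrow> real) \<Rightarrow> real \<Rightarrow> 'a list \<Rightarrow> 'a list list" where
  "division_blocks T eps U =
     (if T U \<le> eps \<or> length U \<le> 1 then [U]
      else division_blocks T eps (take (length U div 2) U)
           @ division_blocks T eps (drop (length U div 2) U))"
  by pat_completeness auto
termination
  by (relation "measure (\<lambda>(T, eps, U). length U)") auto

end

theory Submission
  imports Defs
begin

text \<open>Each split of a block U with T U > eps at least halves the length (up to rounding) and,
  by superadditivity, distributes T U between the two halves. Measuring a block of length m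
  by its remaining depth d m, roughly log2 m, one shows by induction that U yields at most
  1 + d(|U|) T U / eps blocks: the extra block created by a split is paid for by the factor
  T U / eps \<ge> 1 and the loss of one unit of depth.\<close>

definition split_depth :: "nat \<Rightarrow> real" where
  "split_depth m = (if m \<le> 1 then 0 else log 2 (real m - 1) + 1)"

lemma split_depth_nonneg: "split_depth m \<ge> 0"
  unfolding split_depth_def by auto

text \<open>The shift m - 1 absorbs the rounding up of the larger half.\<close>

lemma split_depth_half:
  assumes "m \<ge> 2" and "k \<le> (m + 1) div 2"
  shows "split_depth k + 1 \<le> split_depth m"
proof (cases "k \<le> 1")
  case True
  then show ?thesis using assms by (simp add: split_depth_def)
next
  case False
  then have k: "real k - 1 \<ge> 1" by simp
  have "2 * real k \<le> real m + 1" using assms(2) by linarith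
  then have km: "2 * (real k - 1) \<le> real m - 1" by simp
  have "split_depth k + 1 = log 2 (2 * (real k - 1)) + 1"
    using False k log_mult_pos[of 2 "real k - 1" 2] by (simp add: split_depth_def)
  also have "\<dots> \<le> log 2 (real m - 1) + 1"
    using km k by simp
  also have "\<dots> = split_depth m"
    using assms(1) by (simp add: split_depth_def)
  finally show ?thesis .
qed

lemma split_depth_le_log:
  assumes "m \<ge> 1"
  shows "1 + split_depth m \<le> log 2 (4 * real m)"
proof -
  have "log 2 (4 * real m) = 2 + log 2 (real m)"
    using assms by (simp add: log_mult_pos log_pow_cancel[of 2 2, simplified])
  moreover have "log 2 (real m - 1) \<le> log 2 (real m)" if "m \<ge> 2"
    using that by simp
  ultimately show ?thesis
    using assms by (auto simp add: split_depth_def)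
qed

lemma length_division_blocks_le:
  assumes nonneg: "\<And>A. T A \<ge> 0"
    and superadd: "\<And>A B. T (A @ B) \<ge> T A + T B"
    and eps_pos: "eps > 0"
  shows "real (length (division_blocks T eps U)) \<le> 1 + split_depth (length U) * T U / eps"
proof (induction "length U" arbitrary: U rule: less_induct)
  case less
  show ?case
  proof (cases "T U \<le> eps \<or> length U \<le> 1")
    case True
    then show ?thesis
      using split_depth_nonneg[of "length U"] nonneg[of U] eps_pos by simp
  next
    case False
    define m where "m = length U"
    define A where "A = take (m div 2) U"
    define B where "B = drop (m div 2) U"
    define d where "d = split_depth m - 1"
    have m: "m \<ge> 2" and TU: "T U / eps \<ge> 1"
      using False eps_pos by (simp_all add: m_def)
    have blocks: "division_blocks T eps U = division_blocks T eps A @ division_blocks T eps B"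
      using False by (simp add: A_def B_def m_def)
    have d: "d \<ge> 0"
      using split_depth_half[OF m, of 0] split_depth_nonneg[of 0] by (simp add: d_def)
    have half_bound: "real (length (division_blocks T eps V)) \<le> 1 + d * T V / eps"
      if "length V < m" and "length V \<le> (m + 1) div 2" for V
    proof -
      have "split_depth (length V) \<le> d"
        using split_depth_half[OF m that(2)] by (simp add: d_def)
      then have "split_depth (length V) * T V / eps \<le> d * T V / eps"
        using nonneg[of V] eps_pos by (simp add: divide_right_mono mult_right_mono)
      then show ?thesis
        using less[of V] that(1) by (simp add: m_def)
    qed
    have IA: "real (length (division_blocks T eps A)) \<le> 1 + d * T A / eps"
      by (rule half_bound) (use m in \<open>simp_all add: A_def m_def\<close>)
    have IB: "real (length (division_blocks T eps B)) \<le> 1 + d * T B / eps"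
      by (rule half_bound) (use m in \<open>simp_all add: B_def m_def\<close>)
    have "d * (T A + T B) \<le> d * T U"
      using superadd[of A B] d by (simp add: A_def B_def mult_left_mono)
    then have "d * T A / eps + d * T B / eps \<le> d * T U / eps"
      using eps_pos by (simp add: divide_right_mono add_divide_distrib[symmetric] distrib_left)
    then have "real (length (division_blocks T eps U)) \<le> 2 + d * T U / eps"
      using IA IB blocks by simp
    also have "\<dots> \<le> 1 + split_depth m * T U / eps"
      using TU by (simp add: d_def algebra_simps diff_divide_distrib)
    finally show ?thesis by (simp add: m_def)
  qed
qed

theorem lemma5p18:
  fixes T :: "'a list \<Rightarrow> real" and eps t :: real and n :: nat and U :: "'a list"
  assumes nonneg: "\<And>A. T A \<ge> 0"
    and superadd: "\<And>A B. T (A @ B) \<ge> T A + T B"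
    and single: "\<And>s. T [s] = 0"
    and eps_pos: "eps > 0" and t_pos: "t > 0"
    and n_pos: "n \<ge> 1"
    and len: "length U = n"
    and TU: "T U \<le> t"
  shows "real (length (division_blocks T eps U)) \<le> log 2 (4 * real n) * (1 + t / eps)"
proof -
  have "real (length (division_blocks T eps U)) \<le> 1 + split_depth n * (T U / eps)"
    using length_division_blocks_le[of T eps U, OF nonneg superadd eps_pos] len by simp
  also have "\<dots> \<le> (1 + split_depth n) * (1 + t / eps)"
  proof -
    have "split_depth n * (T U / eps) \<le> split_depth n * (t / eps)"
      using TU eps_pos split_depth_nonneg[of n] by (simp add: mult_left_mono divide_right_mono)
    moreover have "t / eps \<ge> 0"
      using eps_pos t_pos by simp
    ultimately show ?thesis
      using split_depth_nonneg[of n] by (simp add: algebra_simps)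
  qed
  also have "\<dots> \<le> log 2 (4 * real n) * (1 + t / eps)"
    using split_depth_le_log[OF n_pos] eps_pos t_pos by (simp add: mult_right_mono)
  finally show ?thesis .
qed

end
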